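(* Consider the reaction network (BIII) on the fourteen species $\mathrm{NE}_i,\mathrm{NI}_i,\mathrm{N}_i,\mathrm{D}_{si},\mathrm{D}_i,\mathrm{T}_i,\mathrm{B}_i$ ($i=1,2$) with irreversible reactions \[ \begin{aligned} &11:\ \mathrm{NI}_1+\mathrm{NE}_1\to\mathrm{N}_1, && 21:\ \mathrm{NI}_2+\mathrm{NE}_2\to\mathrm{N}_2,\\ &12:\ \mathrm{N}_1+\mathrm{D}_2\to\mathrm{NI}_1+\mathrm{T}_2, && 22:\ \mathrm{N}_2+\mathrm{D}_1\to\mathrm{NI}_2+\mathrm{T}_1,\\ &16:\ \mathrm{N}_1+\mathrm{D}_{s2}\to\mathrm{B}_2, && 26:\ \mathrm{N}_2+\mathrm{D}_{s1}\to\mathrm{B}_1,\\ &17:\ \mathrm{B}_2\to\mathrm{N}_1+\mathrm{D}_{s2}, && 27:\ \mathrm{B}_1\to\mathrm{N}_2+\mathrm{D}_{s1},\\ &18:\ \mathrm{D}_{s1}\to\mathrm{D}_1, && 28:\ \mathrm{D}_{s2}\to\mathrm{D}_2,\\ &19:\ \mathrm{T}_1\to\mathrm{NE}_1+\mathrm{D}_{s1}, && 29:\ \mathrm{T}_2\to\mathrm{NE}_2+\mathrm{D}_{s2}, \end{aligned} \] and the associated ODE system \[ \begin{cases} [\dot{\mathrm{NE}}_1]=-r_{11}([\mathrm{NI}_1],[\mathrm{NE}_1])+r_{19}([\mathrm{T}_1]),\\ [\dot{\mathrm{NI}}_1]=r_{12}([\mathrm{N}_1],[\mathrm{D}_2])-r_{11}([\mathrm{NI}_1],[\mathrm{NE}_1]),\\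 [\dot{\mathrm{N}}_1]=-r_{12}([\mathrm{N}_1],[\mathrm{D}_2])+r_{11}([\mathrm{NI}_1],[\mathrm{NE}_1])-r_{16}([\mathrm{N}_1],[\mathrm{D}_{s2}])+r_{17}([\mathrm{B}_2]),\\ [\dot{\mathrm{D}}_{s1}]=r_{19}([\mathrm{T}_1])-r_{26}([\mathrm{N}_2],[\mathrm{D}_{s1}])+r_{27}([\mathrm{B}_1])-r_{18}([\mathrm{D}_{s1}]),\\ [\dot{\mathrm{D}}_1]=r_{18}([\mathrm{D}_{s1}])-r_{22}([\mathrm{N}_2],[\mathrm{D}_1]),\\ [\dot{\mathrm{T}}_1]=-r_{19}([\mathrm{T}_1])+r_{22}([\mathrm{N}_2],[\mathrm{D}_1]),\\ [\dot{\mathrm{B}}_1]=r_{26}([\mathrm{N}_2],[\mathrm{D}_{s1}])-r_{27}([\mathrm{B}_1]),\\ [\dot{\mathrm{NE}}_2]=-r_{21}([\mathrm{NI}_2],[\mathrm{NE}_2])+r_{29}([\mathrm{T}_2]),\\ [\dot{\mathrm{NI}}_2]=r_{22}([\mathrm{N}_2],[\mathrm{D}_1])-r_{21}([\mathrm{NI}_2],[\mathrm{NE}_2]),\\ [\dot{\mathrm{N}}_2]=-r_{26}([\mathrm{N}_2],[\mathrm{D}_{s1}])+r_{27}([\mathrm{B}_1])-r_{22}([\mathrm{N}_2],[\mathrm{D}_1])+r_{21}([\mathrm{NI}_2],[\mathrm{NE}_2]),\\ [\dot{\mathrm{D}}_{s2}]=r_{29}([\mathrm{T}_2])-r_{16}([\mathrm{N}_1],[\mathrm{D}_{s2}])+r_{17}([\mathrm{B}_2])-r_{28}([\mathrm{D}_{s2}]),\\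 [\dot{\mathrm{D}}_2]=-r_{12}([\mathrm{N}_1],[\mathrm{D}_2])+r_{28}([\mathrm{D}_{s2}]),\\ [\dot{\mathrm{T}}_2]=r_{12}([\mathrm{N}_1],[\mathrm{D}_2])-r_{29}([\mathrm{T}_2]),\\ [\dot{\mathrm{B}}_2]=r_{16}([\mathrm{N}_1],[\mathrm{D}_{s2}])-r_{17}([\mathrm{B}_2]), \end{cases} \] with the kinetic symmetry constraints $r_{1k}\equiv r_{2k}$ for $k=1,2,6,7,8,9$. Then the system has the capacity for zero-eigenvalue bifurcations and thus for differentiation. Moreover, up to the symmetry swapping the cell indices $1\leftrightarrow2$, there is exactly one instability motif associated to an unstable-positive feedback, namely, for $(j,k)=(1,2)$ and $(j,k)=(2,1)$, the subnetwork with species $\{\mathrm{N}_j,\mathrm{D}_{sk},\mathrm{D}_k,\mathrm{T}_k\}$ and reactions $\{j2,\ j6,\ k8,\ k9\}$ (i.e. $\mathrm{N}_j+\mathrm{D}_k\to\mathrm{T}_k+\dots$, $\mathrm{N}_j+\mathrm{D}_{sk}\to\dots$, $\mathrm{D}_{sk}\to\mathrm{D}_k$, $\mathrm{T}_k\to\mathrm{D}_{sk}+\dots$). This motif identifies non-autocatalytic positive feedback, and the network (BIII) is non-autocatalytic.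
   Context: General setting. A reaction network has species $X_1,\dots,X_M$ and irreversible reactions $j:\ \sum_m s^j_m X_m\to\sum_m \tilde s^j_m X_m$ with nonnegative stoichiometric coefficients; $X_m$ is a reactant of $j$ if $s^j_m>0$. The stoichiometric matrix is $S_{mj}=\tilde s^j_m-s^j_m$; the ODE system is $\dot x=S\mathbf r(x)$ with rates $r_j$ that are monotone chemical: (i) $r_j\ge0$ on $\mathbb R^M_{\ge0}$; (ii) $r_j(x)>0$ iff $x_m>0$ for all reactants $X_m$ of $j$; (iii) $\partial r_j/\partial x_m\equiv0$ if $X_m$ is not a reactant of $j$; (iv) $\partial r_j/\partial x_m>0$ for $x>0$ and $X_m$ a reactant of $j$. Kinetics are assumed parameter-rich: at any positive steady state the partial derivatives $\partial r_j/\partial x_m$ (for reactants) can be prescribed as arbitrary positive numbers. Symbolic analysis: $R$ is the symbolic reactivity matrix ($R_{jm}=r_{jm}>0$ a symbol if $X_m$ is a reactant of $j$, else $0$), $G=SR$ the symbolic Jacobian, $n=\dim\ker S^T$, and $a_{M-n}$ the sum of the principal minors of order $M-n$ of $G$ (for a nondegenerate network, the determinant of the Jacobian restricted to a stoichiometric compatibility class $(x_0+\operatorname{Im}S)\cap\mathbb R^M_{>0}$). The network has the capacity for zero-eigenvalue bifurcation (differentiation) if there exist positive symbol values with $a_{M-n}=0$ satisfying kinetic symmetry at a homogeneous steady state, i.e. $r_{jm}=r_{\sigma(j)\sigma(m)}$ where $\sigma$ swaps cell indices $1\leftrightarrow2$ of reactions and species. A $k$-Child-Selection (CS) triple $(\kappa,E_\kappa,J)$: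 $k$ species $\kappa$, $k$ reactions $E_\kappa$, bijection $J:\kappa\to E_\kappa$ with each $X_m\in\kappa$ a reactant of $J(X_m)$; its CS-matrix is $S[\kappa]_{ml}=S_{m,J(X_l)}$, $X_m,X_l\in\kappa$. An unstable-positive feedback is a $k\times k$ CS-matrix with $\operatorname{sign}\det S[\kappa]=(-1)^{k-1}$ such that no principal $k'\times k'$ submatrix, $k'<k$, has determinant of sign $(-1)^{k'-1}$. Its instability motif is the subnetwork with species $\kappa$ and reactions $E_\kappa$ (other species are disregarded). An unstable-positive feedback is autocatalytic if it is a Metzler matrix (nonnegative off-diagonal entries); a network is autocatalytic if it has an autocatalytic unstable-positive feedback, non-autocatalytic otherwise. *)

theory Defs
  imports "HOL-Analysis.Analysis"
begin

text \<open>A network with species type 's and reaction type 'r is given by the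
reactant coefficients rin j m = s^j_m and product coefficients rout j m.\<close>

definition stoich_matrix :: "('r \<Rightarrow> 's \<Rightarrow> nat) \<Rightarrow> ('r \<Rightarrow> 's \<Rightarrow> nat) \<Rightarrow> real^'r^'s" where
  "stoich_matrix rin rout = (\<chi> m j. real (rout j m) - real (rin j m))"

definition reactant :: "('r \<Rightarrow> 's \<Rightarrow> nat) \<Rightarrow> 'r \<Rightarrow> 's \<Rightarrow> bool" where
  "reactant rin j m \<longleftrightarrow> rin j m > 0"

text \<open>Symbolic reactivity matrix R with values rho for the symbols r_jm.\<close>
definition react_matrix :: "('r \<Rightarrow> 's \<Rightarrow> nat) \<Rightarrow> ('r \<Rightarrow> 's \<Rightarrow> real) \<Rightarrow> real^'s^'r" where
  "react_matrix rin rho = (\<chi> j m. if reactant rin j m then rho j m else 0)"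

definition det_on :: "'a set \<Rightarrow> ('a \<Rightarrow> 'a \<Rightarrow> real) \<Rightarrow> real" where
  "det_on K A = (\<Sum>p | p permutes K. of_int (sign p) * (\<Prod>i\<in>K. A i (p i)))"

definition n_cons :: "real^'r^'s::finite \<Rightarrow> nat" where
  "n_cons S = dim {w :: real^'s. w v* S = 0}"

definition principal_minor_sum :: "nat \<Rightarrow> real^'s^'s \<Rightarrow> real" where
  "principal_minor_sum q A = (\<Sum>K | card K = q. det_on K (\<lambda>i j. A $ i $ j))"

definition a_top :: "real^'r^'s::finite \<Rightarrow> real^'s^'s \<Rightarrow> real" where
  "a_top S G = principal_minor_sum (CARD('s) - n_cons S) G"

text \<open>Capacity for zero-eigenvalue bifurcation under kinetic symmetry given by the
cell swaps sr (reactions) and ss (species).\<close>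
definition zero_eig_capacity ::
  "('r::finite \<Rightarrow> 's::finite \<Rightarrow> nat) \<Rightarrow> ('r \<Rightarrow> 's \<Rightarrow> nat) \<Rightarrow> ('r \<Rightarrow> 'r) \<Rightarrow> ('s \<Rightarrow> 's) \<Rightarrow> bool" where
  "zero_eig_capacity rin rout sr ss \<longleftrightarrow>
     (\<exists>rho. (\<forall>j m. reactant rin j m \<longrightarrow> 0 < rho j m)
          \<and> (\<forall>j m. reactant rin j m \<longrightarrow> rho (sr j) (ss m) = rho j m)
          \<and> a_top (stoich_matrix rin rout)
                  (stoich_matrix rin rout ** react_matrix rin rho) = 0)"

definition cs_triple :: "('r \<Rightarrow> 's \<Rightarrow> nat) \<Rightarrow> 's set \<Rightarrow> ('s \<Rightarrow> 'r) \<Rightarrow> bool" where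
  "cs_triple rin \<kappa> J \<longleftrightarrow> \<kappa> \<noteq> {} \<and> inj_on J \<kappa> \<and> (\<forall>m\<in>\<kappa>. reactant rin (J m) m)"

definition cs_det :: "real^'r^'s \<Rightarrow> ('s \<Rightarrow> 'r) \<Rightarrow> 's set \<Rightarrow> real" where
  "cs_det S J K = det_on K (\<lambda>m l. S $ m $ J l)"

definition unstable_pos_fb :: "real^'r^'s \<Rightarrow> 's set \<Rightarrow> ('s \<Rightarrow> 'r) \<Rightarrow> bool" where
  "unstable_pos_fb S \<kappa> J \<longleftrightarrow>
     sgn (cs_det S J \<kappa>) = (-1) ^ (card \<kappa> - 1)
     \<and> (\<forall>K. K \<subset> \<kappa> \<and> K \<noteq> {} \<longrightarrow> sgn (cs_det S J K) \<noteq> (-1) ^ (card K - 1))"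

definition cs_metzler :: "real^'r^'s \<Rightarrow> 's set \<Rightarrow> ('s \<Rightarrow> 'r) \<Rightarrow> bool" where
  "cs_metzler S \<kappa> J \<longleftrightarrow> (\<forall>m\<in>\<kappa>. \<forall>l\<in>\<kappa>. m \<noteq> l \<longrightarrow> 0 \<le> S $ m $ J l)"

definition non_autocatalytic :: "('r::finite \<Rightarrow> 's::finite \<Rightarrow> nat) \<Rightarrow> ('r \<Rightarrow> 's \<Rightarrow> nat) \<Rightarrow> bool" where
  "non_autocatalytic rin rout \<longleftrightarrow>
     \<not> (\<exists>\<kappa> J. cs_triple rin \<kappa> J \<and> unstable_pos_fb (stoich_matrix rin rout) \<kappa> J
              \<and> cs_metzler (stoich_matrix rin rout) \<kappa> J)"

definition instability_motifs :: "('r::finite \<Rightarrow> 's::finite \<Rightarrow> nat) \<Rightarrow> ('r \<Rightarrow> 's \<Rightarrow> nat) \<Rightarrow> ('s set \<times> 'r set) set" where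
  "instability_motifs rin rout =
     {(\<kappa>, J ` \<kappa>) | \<kappa> J. cs_triple rin \<kappa> J \<and> unstable_pos_fb (stoich_matrix rin rout) \<kappa> J}"

datatype cell = C1 | C2

fun other :: "cell \<Rightarrow> cell" where
  "other C1 = C2" | "other C2 = C1"

datatype species = NE cell | NI cell | N cell | Ds cell | D cell | T cell | B cell

text \<open>R1 c, R2 c, ... stand for reactions c1, c2, c6, c7, c8, c9.\<close>
datatype reaction = R1 cell | R2 cell | R6 cell | R7 cell | R8 cell | R9 cell

lemma UNIV_cell: "(UNIV :: cell set) = {C1, C2}"
  by (metis UNIV_eq_I cell.exhaust insertCI singletonI)

instance cell :: finite
  by standard (simp add: UNIV_cell)

lemma UNIV_species: "(UNIV :: species set) =
   range NE \<union> range NI \<union> range N \<union> range Ds \<union> range D \<union> range T \<union> range B"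
  proof -
  have "x \<in> range NE \<union> range NI \<union> range N \<union> range Ds \<union> range D \<union> range T \<union> range B" for x
    by (cases x) auto
  then show ?thesis by blast
qed

instance species :: finite
  by standard (simp add: UNIV_species)

lemma UNIV_reaction: "(UNIV :: reaction set) =
   range R1 \<union> range R2 \<union> range R6 \<union> range R7 \<union> range R8 \<union> range R9"
  proof -
  have "x \<in> range R1 \<union> range R2 \<union> range R6 \<union> range R7 \<union> range R8 \<union> range R9" for x
    by (cases x) auto
  then show ?thesis by blast
qed

instance reaction :: finite
  by standard (simp add: UNIV_reaction)

fun bIII_in :: "reaction \<Rightarrow> species \<Rightarrow> nat" where
  "bIII_in (R1 c) m = (if m = NI c \<or> m = NE c then 1 else 0)"
| "bIII_in (R2 c) m = (if m = N c \<or> m = D (other c) then 1 else 0)"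
| "bIII_in (R6 c) m = (if m = N c \<or> m = Ds (other c) then 1 else 0)"
| "bIII_in (R7 c) m = (if m = B (other c) then 1 else 0)"
| "bIII_in (R8 c) m = (if m = Ds c then 1 else 0)"
| "bIII_in (R9 c) m = (if m = T c then 1 else 0)"

fun bIII_out :: "reaction \<Rightarrow> species \<Rightarrow> nat" where
  "bIII_out (R1 c) m = (if m = N c then 1 else 0)"
| "bIII_out (R2 c) m = (if m = NI c \<or> m = T (other c) then 1 else 0)"
| "bIII_out (R6 c) m = (if m = B (other c) then 1 else 0)"
| "bIII_out (R7 c) m = (if m = N c \<or> m = Ds (other c) then 1 else 0)"
| "bIII_out (R8 c) m = (if m = D c then 1 else 0)"
| "bIII_out (R9 c) m = (if m = NE c \<or> m = Ds c then 1 else 0)"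

fun swap_species :: "species \<Rightarrow> species" where
  "swap_species (NE c) = NE (other c)"
| "swap_species (NI c) = NI (other c)"
| "swap_species (N c) = N (other c)"
| "swap_species (Ds c) = Ds (other c)"
| "swap_species (D c) = D (other c)"
| "swap_species (T c) = T (other c)"
| "swap_species (B c) = B (other c)"

fun swap_reaction :: "reaction \<Rightarrow> reaction" where
  "swap_reaction (R1 c) = R1 (other c)"
| "swap_reaction (R2 c) = R2 (other c)"
| "swap_reaction (R6 c) = R6 (other c)"
| "swap_reaction (R7 c) = R7 (other c)"
| "swap_reaction (R8 c) = R8 (other c)"
| "swap_reaction (R9 c) = R9 (other c)"

definition bIII_motif :: "cell \<Rightarrow> species set \<times> reaction set" where
  "bIII_motif j = ({N j, Ds (other j), D (other j), T (other j)},
                   {R2 j, R6 j, R8 (other j), R9 (other j)})"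

end

theory Submission
  imports Defs "Jordan_Normal_Form.Determinant"
begin

(* At unit reactivities the Jacobian G = S R has, besides the five left null vectors given by
   the conservation laws, a right null vector that is odd under the cell swap and orthogonal to
   all conservation laws. So zero is an eigenvalue of G of algebraic multiplicity at least six and
   the coefficient a_{M-n} = a_9 of its characteristic polynomial vanishes; this is seen after a
   unipotent change of basis that turns the conservation laws into zero rows.

   An unstable-positive feedback is irreducible: a block-triangular CS-matrix would factor its
   determinant so that one factor already has the forbidden sign. The species fall into two
   blocks {NE_c, NI_c, N_c, Ds_k, D_k, T_k, B_k} (k the other cell) joined only by T_c producing
   NE_c, so a feedback lies in one block or contains NE, T and hence N of both cells. The few
   remaining candidates, with all their Child-Selection maps, are refuted by evaluating
   determinant signs, except those containing a motif, which by minimality equal it. In the motif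
   the reaction j2 selected for D_k consumes N_j, a negative off-diagonal entry, so no
   unstable-positive feedback is Metzler. *)

no_notation Matrix.vec_index (infixl "$" 100)

section \<open>Principal minors\<close>

lemma det_on_cong:
  assumes "\<And>i j. i \<in> K \<Longrightarrow> j \<in> K \<Longrightarrow> A i j = A' i j"
  shows "det_on K A = det_on K A'"
  unfolding det_on_def
proof (rule sum.cong[OF refl])
  fix p assume "p \<in> {p. p permutes K}"
  then show "of_int (sign p) * (\<Prod>i\<in>K. A i (p i)) = of_int (sign p) * (\<Prod>i\<in>K. A' i (p i))"
    using assms permutes_in_image[of p K] by (auto intro!: prod.cong)
qed

lemma det_on_reindex:
  assumes f: "bij_betw f I K" and "finite I"
  shows "det_on K A = det_on I (\<lambda>i j. A (f i) (f j))"
proof -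
  define g where "g = inv_into I f"
  have g: "bij_betw g K I"
    unfolding g_def using f by (rule bij_betw_inv_into)
  have fg: "f (g x) = x" if "x \<in> K" for x
    unfolding g_def using f that by (meson bij_betw_inv_into_right)
  have gf: "g (f i) = i" if "i \<in> I" for i
    unfolding g_def using f that by (meson bij_betw_inv_into_left)
  have inj_f: "inj_on f I"
    using f bij_betw_def by blast
  define \<phi> where "\<phi> = map_permutation I f"
  have \<phi>: "bij_betw \<phi> {q. q permutes I} {p. p permutes K}"
  proof (rule bij_betw_byWitness[where f' = "map_permutation K g"])
    show "\<forall>q\<in>{q. q permutes I}. map_permutation K g (\<phi> q) = q"
      unfolding \<phi>_def using map_permutation_compose_inv[OF f _ gf] by auto
    show "\<forall>p\<in>{p. p permutes K}. \<phi> (map_permutation K g p) = p"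
      unfolding \<phi>_def using map_permutation_compose_inv[OF g _ fg] by auto
    show "\<phi> ` {q. q permutes I} \<subseteq> {p. p permutes K}"
      unfolding \<phi>_def using map_permutation_permutes[OF f] by auto
    show "map_permutation K g ` {p. p permutes K} \<subseteq> {q. q permutes I}"
      using map_permutation_permutes[OF g] by auto
  qed
  have "det_on K A = (\<Sum>q | q permutes I. of_int (sign (\<phi> q)) * (\<Prod>x\<in>K. A x (\<phi> q x)))"
    unfolding det_on_def by (rule sum.reindex_bij_betw[OF \<phi>, symmetric])
  also have "\<dots> = (\<Sum>q | q permutes I. of_int (sign q) * (\<Prod>i\<in>I. A (f i) (f (q i))))"
  proof (rule sum.cong[OF refl])
    fix q assume "q \<in> {q. q permutes I}"
    then have q: "q permutes I" by simp
    have "sign (\<phi> q) = sign q"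
      unfolding \<phi>_def by (rule sign_map_permutation[OF inj_f q \<open>finite I\<close>])
    moreover have "(\<Prod>x\<in>K. A x (\<phi> q x)) = (\<Prod>i\<in>I. A (f i) (\<phi> q (f i)))"
      by (rule prod.reindex_bij_betw[OF f, symmetric])
    moreover have "\<phi> q (f i) = f (q i)" if "i \<in> I" for i
      unfolding \<phi>_def using map_permutation_apply[OF inj_f that] .
    ultimately show "of_int (sign (\<phi> q)) * (\<Prod>x\<in>K. A x (\<phi> q x)) =
        of_int (sign q) * (\<Prod>i\<in>I. A (f i) (f (q i)))"
      by simp
  qed
  finally show ?thesis
    unfolding det_on_def .
qed

lemma det_on_eq_det_mat:
  assumes "distinct xs"
  shows "det_on (set xs) A = det (mat (length xs) (length xs) (\<lambda>(i, j). A (xs ! i) (xs ! j)))"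
proof -
  have "bij_betw (\<lambda>i. xs ! i) {0..<length xs} (set xs)"
    using bij_betw_nth[OF assms] by (simp add: atLeast0LessThan)
  then have "det_on (set xs) A = det_on {0..<length xs} (\<lambda>i j. A (xs ! i) (xs ! j))"
    by (rule det_on_reindex) simp
  also have "\<dots> = det (mat (length xs) (length xs) (\<lambda>(i, j). A (xs ! i) (xs ! j)))"
    unfolding det_on_def det_def'[OF mat_carrier]
    by (auto intro!: sum.cong prod.cong dest: permutes_in_image)
  finally show ?thesis .
qed

lemma det_on_block_triangular:
  assumes "finite K" "finite L" "K \<inter> L = {}"
    and zero: "\<And>i j. i \<in> K \<Longrightarrow> j \<in> L \<Longrightarrow> A i j = 0"
  shows "det_on (K \<union> L) A = det_on K A * det_on L A"
proof -
  obtain xs where xs: "set xs = K" "distinct xs" using finite_distinct_list[OF assms(1)] by blast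
  obtain ys where ys: "set ys = L" "distinct ys" using finite_distinct_list[OF assms(2)] by blast
  define k where "k = length xs"
  define l where "l = length ys"
  define M11 where "M11 = mat k k (\<lambda>(i, j). A (xs ! i) (xs ! j))"
  define M21 where "M21 = mat l k (\<lambda>(i, j). A (ys ! i) (xs ! j))"
  define M22 where "M22 = mat l l (\<lambda>(i, j). A (ys ! i) (ys ! j))"
  have "mat (k + l) (k + l) (\<lambda>(i, j). A ((xs @ ys) ! i) ((xs @ ys) ! j))
      = four_block_mat M11 (0\<^sub>m k l) M21 M22"
  proof (rule eq_matI)
    fix i j assume "i < dim_row (four_block_mat M11 (0\<^sub>m k l) M21 M22)"
      and "j < dim_col (four_block_mat M11 (0\<^sub>m k l) M21 M22)"
    then have i: "i < k + l" and j: "j < k + l" by (simp_all add: M11_def M22_def)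
    have "A (xs ! i) (ys ! (j - k)) = 0" if "i < k" "\<not> j < k"
      using zero that i j xs ys unfolding k_def l_def by auto
    with i j show "mat (k + l) (k + l) (\<lambda>(i, j). A ((xs @ ys) ! i) ((xs @ ys) ! j)) $$ (i, j)
        = four_block_mat M11 (0\<^sub>m k l) M21 M22 $$ (i, j)"
      by (simp add: four_block_mat_def Let_def M11_def M21_def M22_def nth_append k_def)
  qed (simp_all add: M11_def M22_def four_block_mat_def Let_def)
  moreover have "distinct (xs @ ys)" "set (xs @ ys) = K \<union> L"
    using xs ys assms(3) by auto
  ultimately have "det_on (K \<union> L) A = det (four_block_mat M11 (0\<^sub>m k l) M21 M22)"
    using det_on_eq_det_mat[of "xs @ ys" A] by (simp add: k_def l_def)
  also have "\<dots> = det M11 * det M22"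
    by (rule det_four_block_mat_upper_right_zero[where n = k and m = l]) (simp_all add: M11_def M21_def M22_def)
  also have "\<dots> = det_on K A * det_on L A"
    using det_on_eq_det_mat[OF xs(2), of A] det_on_eq_det_mat[OF ys(2), of A] xs ys
    by (simp add: M11_def M22_def k_def l_def)
  finally show ?thesis .
qed

lemma det_on_eq_0_if_zero_row:
  assumes "finite K" "i \<in> K" "\<And>j. j \<in> K \<Longrightarrow> A i j = 0"
  shows "det_on K A = 0"
  unfolding det_on_def
proof (rule sum.neutral, rule ballI)
  fix p assume "p \<in> {p. p permutes K}"
  then have "p i \<in> K" using permutes_in_image[of p K i] assms(2) by simp
  then have "(\<Prod>i\<in>K. A i (p i)) = 0"
    using assms by (auto intro: prod_zero)
  then show "of_int (sign p) * (\<Prod>i\<in>K. A i (p i)) = 0" by simp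
qed

lemma det_on_eq_0_if_null_vector:
  assumes "finite K" "k \<in> K" "v k \<noteq> 0"
    and null: "\<And>i. i \<in> K \<Longrightarrow> (\<Sum>j\<in>K. A i j * v j) = 0"
  shows "det_on K A = 0"
proof -
  obtain xs where xs: "set xs = K" "distinct xs" using finite_distinct_list[OF assms(1)] by blast
  define n where "n = length xs"
  define M where "M = mat n n (\<lambda>(i, j). A (xs ! i) (xs ! j))"
  define w where "w = vec n (\<lambda>j. v (xs ! j))"
  have nth: "bij_betw (\<lambda>j. xs ! j) {0..<n} K"
    using bij_betw_nth[OF xs(2)] xs(1) unfolding n_def by (simp add: atLeast0LessThan)
  obtain k' where k': "k' < n" "xs ! k' = k"
    using assms(2) xs(1) unfolding n_def by (metis in_set_conv_nth)
  have "w \<noteq> 0\<^sub>v n"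
  proof
    assume "w = 0\<^sub>v n"
    then have "Matrix.vec_index w k' = 0" using k' by simp
    then show False using k' assms(3) unfolding w_def by simp
  qed
  moreover have "M *\<^sub>v w = 0\<^sub>v n"
  proof (rule eq_vecI)
    fix i assume "i < dim_vec (0\<^sub>v n :: real vec)"
    then have i: "i < n" by simp
    then have "Matrix.vec_index (M *\<^sub>v w) i = (\<Sum>j = 0..<n. A (xs ! i) (xs ! j) * v (xs ! j))"
      unfolding M_def w_def by (simp add: scalar_prod_def)
    also have "\<dots> = (\<Sum>j\<in>K. A (xs ! i) j * v j)"
      by (rule sum.reindex_bij_betw[OF nth])
    also have "\<dots> = 0"
      using null[of "xs ! i"] nth_mem[of i xs] i xs(1) unfolding n_def by simp
    finally show "Matrix.vec_index (M *\<^sub>v w) i = Matrix.vec_index (0\<^sub>v n) i"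
      using i by simp
  qed (simp add: M_def)
  moreover have "M \<in> carrier_mat n n" "w \<in> carrier_vec n"
    unfolding M_def w_def by simp_all
  ultimately have "det M = 0"
    using det_0_iff_vec_prod_zero by blast
  then show ?thesis
    using det_on_eq_det_mat[OF xs(2), of A] xs(1) unfolding M_def n_def by simp
qed

(* Expansion along the first row, skipping zero entries so that sparse matrices evaluate fast. *)
fun laplace_det :: "'a list \<Rightarrow> 'b list \<Rightarrow> ('a \<Rightarrow> 'b \<Rightarrow> 'c::comm_ring_1) \<Rightarrow> 'c"
  and laplace_row :: "'a \<Rightarrow> 'a list \<Rightarrow> ('a \<Rightarrow> 'b \<Rightarrow> 'c) \<Rightarrow> 'b list \<Rightarrow> 'b list \<Rightarrow> 'c \<Rightarrow> 'c"
where
  "laplace_det [] cs A = 1"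
| "laplace_det (r # rs) cs A = laplace_row r rs A [] cs 1"
| "laplace_row r rs A pre [] s = 0"
| "laplace_row r rs A pre (c # post) s =
     (if A r c = 0 then 0 else s * A r c * laplace_det rs (pre @ post) A)
     + laplace_row r rs A (pre @ [c]) post (- s)"

lemma laplace_row_eq_sum:
  "laplace_row r rs A pre post s = (\<Sum>j<length post.
     s * (-1) ^ j * A r (post ! j) * laplace_det rs (pre @ take j post @ drop (Suc j) post) A)"
proof (induction post arbitrary: pre s)
  case (Cons c post)
  show ?case
    unfolding laplace_row.simps Cons.IH length_Cons sum.lessThan_Suc_shift
    by (auto intro!: sum.cong simp: algebra_simps)
qed simp

lemma laplace_det_eq_det:
  "length rs = length cs \<Longrightarrow>
   laplace_det rs cs A = det (mat (length cs) (length cs) (\<lambda>(i, j). A (rs ! i) (cs ! j)))"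
proof (induction rs arbitrary: cs)
  case Nil
  then show ?case by (simp add: det_def')
next
  case (Cons r rs)
  obtain n where n: "length cs = Suc n" using Cons.prems by (cases cs) auto
  define M where "M = mat (Suc n) (Suc n) (\<lambda>(i, j). A ((r # rs) ! i) (cs ! j))"
  define cs' where "cs' j = take j cs @ drop (Suc j) cs" for j
  have minor: "mat_delete M 0 j = mat n n (\<lambda>(i, k). A (rs ! i) (cs' j ! k))" if "j < Suc n" for j
    unfolding mat_delete_def M_def cs'_def
    by (rule eq_matI) (use that n in \<open>auto simp: nth_append min_def\<close>)
  have "det M = (\<Sum>j<Suc n. M $$ (0, j) * cofactor M 0 j)"
    by (rule laplace_expansion_row) (simp_all add: M_def)
  also have "\<dots> = (\<Sum>j<Suc n. (-1) ^ j * A r (cs ! j) * laplace_det rs (cs' j) A)"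
  proof (rule sum.cong[OF refl])
    fix j assume "j \<in> {..<Suc n}"
    then have j: "j < Suc n" by simp
    then have "laplace_det rs (cs' j) A = det (mat n n (\<lambda>(i, k). A (rs ! i) (cs' j ! k)))"
      using Cons.IH[of "cs' j"] Cons.prems n unfolding cs'_def by simp
    then show "M $$ (0, j) * cofactor M 0 j = (-1) ^ j * A r (cs ! j) * laplace_det rs (cs' j) A"
      unfolding cofactor_def minor[OF j] using j by (simp add: M_def)
  qed
  finally show ?case
    by (simp add: laplace_row_eq_sum M_def n cs'_def)
qed

lemma det_on_eq_laplace_det:
  assumes "distinct xs"
  shows "det_on (set xs) (\<lambda>m l. A m (f l)) = laplace_det xs (map f xs) A"
proof -
  have "mat (length xs) (length xs) (\<lambda>(i, j). A (xs ! i) (map f xs ! j))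
      = mat (length xs) (length xs) (\<lambda>(i, j). A (xs ! i) (f (xs ! j)))"
    by (rule eq_matI) auto
  then show ?thesis
    using det_on_eq_det_mat[OF assms] laplace_det_eq_det[of xs "map f xs" A] by simp
qed

lemma set_zip_map_self: "set (zip xs (map f xs)) = (\<lambda>x. (x, f x)) ` set xs"
  by (induction xs) auto

lemma prod_scaled_indicator:
  fixes t :: real
  assumes "finite X"
  shows "(\<Prod>i\<in>X. t * (if i = p i then 1 else 0)) = (if \<forall>i\<in>X. p i = i then t ^ card X else 0)"
proof (cases "\<forall>i\<in>X. p i = i")
  case False
  then obtain i where "i \<in> X" "p i \<noteq> i" by auto
  then have "(\<Prod>i\<in>X. t * (if i = p i then 1 else 0)) = 0"
    using assms by (intro prod_zero bexI[of _ i]) auto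
  then show ?thesis
    unfolding if_not_P[OF False] .
qed (auto intro!: prod.cong)

lemma matrix_add_rdistrib: "(X + Y) ** Z = X ** Z + Y ** (Z :: 'a::semiring_1^'n^'m)"
  by (simp add: Finite_Cartesian_Product.vec_eq_iff matrix_matrix_mult_def sum.distrib distrib_right)

lemma matrix_diff_ldistrib: "X ** (Y - Z) = X ** Y - X ** (Z :: 'a::ring_1^'n^'m)"
  by (simp add: Finite_Cartesian_Product.vec_eq_iff matrix_matrix_mult_def sum_subtractf right_diff_distrib)

lemma matrix_diff_rdistrib: "(X - Y) ** Z = X ** Z - Y ** (Z :: 'a::ring_1^'n^'m)"
  by (simp add: Finite_Cartesian_Product.vec_eq_iff matrix_matrix_mult_def sum_subtractf left_diff_distrib)

lemma card_Compl_eq: "card (- K) = CARD('n::finite) - card (K :: 'n set)"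
  by (metis Compl_eq_Diff_UNIV card_Diff_subset finite subset_UNIV)

lemma det_add_scaleR_mat_1:
  fixes A :: "real^'n^'n"
  shows "Determinants.det (A + t *\<^sub>R Finite_Cartesian_Product.mat 1) =
     (\<Sum>q\<le>CARD('n). t ^ (CARD('n) - q) * principal_minor_sum q A)"
proof -
  let ?U = "UNIV :: 'n set"
  let ?A = "\<lambda>i j. A $ i $ j"
  have fixes_iff: "p permutes ?U \<and> (\<forall>i\<in>X. p i = i) \<longleftrightarrow> p permutes - X" for p and X :: "'n set"
    unfolding permutes_def by auto
  have "Determinants.det (A + t *\<^sub>R Finite_Cartesian_Product.mat 1) =
    (\<Sum>p | p permutes ?U. of_int (sign p) * (\<Prod>i\<in>?U. t * (if i = p i then 1 else 0) + A $ i $ p i))"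
    unfolding Determinants.det_def by (simp add: Finite_Cartesian_Product.mat_def add.commute)
  also have "\<dots> = (\<Sum>p | p permutes ?U. \<Sum>X\<in>Pow ?U. of_int (sign p) *
      ((if \<forall>i\<in>X. p i = i then t ^ card X else 0) * (\<Prod>i\<in>?U - X. A $ i $ p i)))"
    by (simp add: prod_add prod_scaled_indicator sum_distrib_left)
  also have "\<dots> = (\<Sum>X\<in>Pow ?U. \<Sum>p | p permutes ?U. of_int (sign p) *
      ((if \<forall>i\<in>X. p i = i then t ^ card X else 0) * (\<Prod>i\<in>?U - X. A $ i $ p i)))"
    by (rule sum.swap)
  also have "\<dots> = (\<Sum>X\<in>Pow ?U. t ^ card X * det_on (- X) ?A)"
  proof (rule sum.cong[OF refl])
    fix X :: "'n set"
    have "(\<Sum>p | p permutes ?U. of_int (sign p) *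
        ((if \<forall>i\<in>X. p i = i then t ^ card X else 0) * (\<Prod>i\<in>?U - X. A $ i $ p i)))
      = (\<Sum>p | p permutes ?U \<and> (\<forall>i\<in>X. p i = i).
          t ^ card X * (of_int (sign p) * (\<Prod>i\<in>- X. A $ i $ p i)))"
      by (rule sum.mono_neutral_cong_right) (auto simp: Compl_eq_Diff_UNIV)
    also have "\<dots> = t ^ card X * det_on (- X) ?A"
      unfolding det_on_def fixes_iff by (simp add: sum_distrib_left)
    finally show "(\<Sum>p | p permutes ?U. of_int (sign p) *
        ((if \<forall>i\<in>X. p i = i then t ^ card X else 0) * (\<Prod>i\<in>?U - X. A $ i $ p i)))
      = t ^ card X * det_on (- X) ?A" .
  qed
  also have "\<dots> = (\<Sum>K\<in>Pow ?U. t ^ (CARD('n) - card K) * det_on K ?A)"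
    by (rule sum.reindex_bij_witness[where i = uminus and j = uminus]) (auto simp: card_Compl_eq card_mono)
  also have "\<dots> = (\<Sum>q\<le>CARD('n). \<Sum>K | K \<in> Pow ?U \<and> card K = q. t ^ (CARD('n) - card K) * det_on K ?A)"
    by (rule sum.group[symmetric]) (auto simp: card_mono)
  also have "\<dots> = (\<Sum>q\<le>CARD('n). t ^ (CARD('n) - q) * principal_minor_sum q A)"
    unfolding principal_minor_sum_def by (auto intro!: sum.cong simp: sum_distrib_left)
  finally show ?thesis .
qed

lemma principal_minor_sum_similar:
  fixes A P Q :: "real^'n^'n"
  assumes PQ: "P ** Q = Finite_Cartesian_Product.mat 1"
  shows "principal_minor_sum q (P ** A ** Q) = principal_minor_sum q A"
proof (cases "q \<le> CARD('n)")
  case True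
  let ?n = "CARD('n)"
  let ?I = "Finite_Cartesian_Product.mat 1 :: real^'n^'n"
  have "Determinants.det (P ** A ** Q + t *\<^sub>R ?I) = Determinants.det (A + t *\<^sub>R ?I)" for t
  proof -
    have "P ** A ** Q + t *\<^sub>R ?I = P ** (A + t *\<^sub>R ?I) ** Q"
      by (simp add: matrix_add_ldistrib matrix_scalar_ac
          matrix_add_rdistrib scalar_matrix_assoc[symmetric] matrix_mul_assoc[symmetric] PQ)
    then have "Determinants.det (P ** A ** Q + t *\<^sub>R ?I)
        = Determinants.det (A + t *\<^sub>R ?I) * Determinants.det (P ** Q)"
      by (simp add: det_mul)
    then show ?thesis
      using PQ by simp
  qed
  moreover have reflect: "(\<Sum>q\<le>?n. t ^ (?n - q) * c q) = (\<Sum>i\<le>?n. c (?n - i) * t ^ i)"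
    for t and c :: "nat \<Rightarrow> real"
    by (rule sum.reindex_bij_witness[where i = "\<lambda>i. ?n - i" and j = "\<lambda>i. ?n - i"]) auto
  ultimately have "\<forall>t. (\<Sum>i\<le>?n. principal_minor_sum (?n - i) (P ** A ** Q) * t ^ i) =
                 (\<Sum>i\<le>?n. principal_minor_sum (?n - i) A * t ^ i)"
    unfolding det_add_scaleR_mat_1 reflect by simp
  then have "\<forall>i\<le>?n. principal_minor_sum (?n - i) (P ** A ** Q) = principal_minor_sum (?n - i) A"
    unfolding polyfun_eq_coeffs .
  from this[rule_format, of "?n - q"] True show ?thesis
    by simp
next
  case False
  have "card K \<le> CARD('n)" for K :: "'n set"
    by (rule card_mono) auto
  with False have "{K :: 'n set. card K = q} = {}"
    by (metis (mono_tags, lifting) empty_Collect_eq)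
  then show ?thesis
    unfolding principal_minor_sum_def by simp
qed

lemma principal_minor_sum_eq_0_if_zero_rows:
  fixes H :: "real^'n^'n"
  assumes zero_rows: "\<And>p. p \<in> Z \<Longrightarrow> H $ p = 0"
    and null: "H *v v = 0" "v \<noteq> 0" and support: "\<And>p. p \<in> Z \<Longrightarrow> v $ p = 0"
  shows "principal_minor_sum (CARD('n) - card Z) H = 0"
  unfolding principal_minor_sum_def
proof (rule sum.neutral, rule ballI)
  fix K :: "'n set"
  assume "K \<in> {K. card K = CARD('n) - card Z}"
  then have card_K: "card K = card (- Z)"
    by (simp add: card_Compl_eq)
  show "det_on K (\<lambda>i j. H $ i $ j) = 0"
  proof (cases "K = - Z")
    case True
    obtain k where "v $ k \<noteq> 0"
      using null(2) by (metis Finite_Cartesian_Product.vec_eq_iff zero_index)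
    moreover have "(\<Sum>j\<in>K. H $ i $ j * v $ j) = 0" for i
    proof -
      have "(\<Sum>j\<in>K. H $ i $ j * v $ j) = (H *v v) $ i"
        unfolding matrix_vector_mult_def True
        by (auto intro: sum.mono_neutral_left simp: support)
      then show ?thesis using null(1) by simp
    qed
    ultimately show ?thesis
      using support True by (intro det_on_eq_0_if_null_vector[of K k "\<lambda>j. v $ j"]) auto
  next
    case False
    with card_K obtain p where "p \<in> K" "p \<in> Z"
      by (metis card_subset_eq finite subsetI ComplI)
    then show ?thesis
      using zero_rows by (intro det_on_eq_0_if_zero_row[of K p]) auto
  qed
qed

lemma mat_1_add_diff_inverse:
  fixes E :: "'a::ring_1^'n^'n"
  assumes "E ** E = 0"
  shows "(Finite_Cartesian_Product.mat 1 + E) ** (Finite_Cartesian_Product.mat 1 - E)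
      = Finite_Cartesian_Product.mat 1"
    and "(Finite_Cartesian_Product.mat 1 - E) ** (Finite_Cartesian_Product.mat 1 + E)
      = Finite_Cartesian_Product.mat 1"
  using assms by (simp_all add: matrix_add_ldistrib matrix_diff_ldistrib
      matrix_add_rdistrib matrix_diff_rdistrib)

lemma principal_minor_sum_eq_0_if_null_vectors:
  fixes G :: "real^'n^'n" and w :: "'n \<Rightarrow> real^'n"
  assumes left_null: "\<And>p. p \<in> Z \<Longrightarrow> w p v* G = 0"
    and pivot: "\<And>p q. p \<in> Z \<Longrightarrow> q \<in> Z \<Longrightarrow> w p $ q = (if q = p then 1 else 0)"
    and right_null: "G *v u = 0" "u \<noteq> 0"
    and orthogonal: "\<And>p. p \<in> Z \<Longrightarrow> w p \<bullet> u = 0"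
  shows "principal_minor_sum (CARD('n) - card Z) G = 0"
proof -
  \<comment> \<open>P has the rows w p for p in Z and the inverse Q, so P G Q has zero rows Z and the
      null vector P u, which vanishes on Z.\<close>
  define E :: "real^'n^'n" where "E = (\<chi> p q. if p \<in> Z \<and> q \<notin> Z then w p $ q else 0)"
  define P where "P = Finite_Cartesian_Product.mat 1 + E"
  define Q where "Q = Finite_Cartesian_Product.mat 1 - E"
  have "E ** E = 0"
    by (auto simp: Finite_Cartesian_Product.vec_eq_iff matrix_matrix_mult_def E_def
        intro!: sum.neutral)
  then have PQ: "P ** Q = Finite_Cartesian_Product.mat 1" and QP: "Q ** P = Finite_Cartesian_Product.mat 1"
    unfolding P_def Q_def by (rule mat_1_add_diff_inverse)+
  have row_P: "P $ p = w p" if "p \<in> Z" for p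
    using that pivot[OF that]
    by (auto simp: Finite_Cartesian_Product.vec_eq_iff P_def E_def Finite_Cartesian_Product.mat_def)
  have "principal_minor_sum (CARD('n) - card Z) (P ** G ** Q) = 0"
  proof (rule principal_minor_sum_eq_0_if_zero_rows)
    fix p assume p: "p \<in> Z"
    have "(P ** G ** Q) $ p = (P $ p) v* G v* Q"
      by (simp add: Finite_Cartesian_Product.vec_eq_iff matrix_matrix_mult_def
          vector_matrix_mult_def sum_distrib_right sum_distrib_left mult.assoc)
    then show "(P ** G ** Q) $ p = 0"
      using left_null[OF p] row_P[OF p] by simp
    show "(P *v u) $ p = 0"
      using orthogonal[OF p] row_P[OF p] by (simp add: matrix_vector_mul_component)
  next
    have "(P ** G ** Q) *v (P *v u) = P *v (G *v ((Q ** P) *v u))"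
      by (simp add: matrix_vector_mul_assoc matrix_mul_assoc)
    then show "(P ** G ** Q) *v (P *v u) = 0"
      using right_null(1) QP by simp
    have "Q *v (P *v u) = u"
      by (simp add: matrix_vector_mul_assoc QP)
    then show "P *v u \<noteq> 0"
      using right_null(2) by auto
  qed
  then show ?thesis
    unfolding principal_minor_sum_similar[OF PQ] .
qed

lemma dim_eq_card_if_pivot_basis:
  fixes w :: "'n \<Rightarrow> real^'n"
  assumes "subspace V" and in_V: "\<And>p. p \<in> Z \<Longrightarrow> w p \<in> V"
    and pivot: "\<And>p q. p \<in> Z \<Longrightarrow> q \<in> Z \<Longrightarrow> w p $ q = (if q = p then 1 else 0)"
    and expand: "\<And>v. v \<in> V \<Longrightarrow> v = (\<Sum>p\<in>Z. v $ p *\<^sub>R w p)"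
  shows "dim V = card Z"
proof -
  have inj: "inj_on w Z"
  proof (rule inj_onI)
    fix p q assume "p \<in> Z" "q \<in> Z" "w p = w q"
    then show "p = q" using pivot[of p p] pivot[of q p] by (auto split: if_splits)
  qed
  have "V \<subseteq> span (w ` Z)"
  proof
    fix v assume "v \<in> V"
    then have "v = (\<Sum>p\<in>Z. v $ p *\<^sub>R w p)" by (rule expand)
    also have "\<dots> \<in> span (w ` Z)"
      by (intro span_sum span_scale span_base) auto
    finally show "v \<in> span (w ` Z)" .
  qed
  then have span: "span (w ` Z) = V"
    using in_V \<open>subspace V\<close> by (intro span_subspace) auto
  have indep: "independent (w ` Z)"
    unfolding independent_explicit
  proof (intro conjI allI impI ballI)
    fix c x assume c: "(\<Sum>x\<in>w ` Z. c x *\<^sub>R x) = 0" and "x \<in> w ` Z"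
    then obtain q where q: "q \<in> Z" "x = w q" by auto
    have "(\<Sum>p\<in>Z. c (w p) *\<^sub>R w p) = 0"
      using c by (simp add: sum.reindex[OF inj])
    then have "(\<Sum>p\<in>Z. c (w p) * w p $ q) = 0"
      using sum_component[of "\<lambda>p. c (w p) *\<^sub>R w p" Z q] by simp
    also have "(\<Sum>p\<in>Z. c (w p) * w p $ q) = c (w q)"
      using q(1) by (simp add: pivot if_distrib[of "\<lambda>y. c _ * y"] cong: if_cong)
    finally show "c x = 0" using q(2) by simp
  qed simp
  then have "dim (w ` Z) = card Z"
    using dim_eq_card_independent[OF indep] card_image[OF inj] by simp
  then show ?thesis
    unfolding span[symmetric] dim_span .
qed

lemma subspace_left_null: "subspace {w. w v* (A :: real^'m^'n) = 0}"
  using real_vector.linear_subspace_kernel[OF matrix_vector_mul_linear[of "transpose A"]] by simp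

section \<open>Unstable-positive feedbacks are irreducible\<close>

lemma sgn_mult_alternating:
  fixes a b :: real
  assumes "sgn (a * b) = (-1) ^ (k + l - 1)" "k \<ge> 1" "l \<ge> 1"
  shows "sgn a = (-1) ^ (k - 1) \<or> sgn b = (-1) ^ (l - 1)"
proof -
  obtain k' l' where "k = Suc k'" "l = Suc l'"
    using assms(2,3) by (metis One_nat_def Suc_le_D)
  then have "(-1::real) ^ (k + l - 1) = - ((-1) ^ (k - 1) * (-1) ^ (l - 1))"
    by (simp add: power_add)
  moreover have "(-1::real) ^ (k - 1) \<in> {-1, 1}" "(-1::real) ^ (l - 1) \<in> {-1, 1}"
    by (simp_all add: minus_one_power_iff)
  moreover have "sgn a \<in> {-1, 0, 1}" "sgn b \<in> {-1, 0, 1}"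
    by (simp_all add: sgn_real_def)
  ultimately show ?thesis
    using assms(1) by (auto simp: sgn_mult)
qed

lemma unstable_pos_fb_irreducible:
  assumes upf: "unstable_pos_fb S \<kappa> J" and "finite \<kappa>"
    and partition: "K \<union> L = \<kappa>" "K \<inter> L = {}" "K \<noteq> {}" "L \<noteq> {}"
  shows "\<exists>i\<in>K. \<exists>j\<in>L. S $ i $ J j \<noteq> 0"
proof (rule ccontr)
  assume "\<not> ?thesis"
  then have "cs_det S J \<kappa> = cs_det S J K * cs_det S J L"
    unfolding cs_det_def partition(1)[symmetric] using partition \<open>finite \<kappa>\<close>
    by (intro det_on_block_triangular) auto
  moreover have "card \<kappa> = card K + card L" "card K \<ge> 1" "card L \<ge> 1"
    using partition \<open>finite \<kappa>\<close> by (auto simp: card_Un_disjoint Suc_le_eq card_gt_0_iff)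
  moreover have "K \<subset> \<kappa>" "L \<subset> \<kappa>"
    using partition by auto
  moreover have "sgn (cs_det S J \<kappa>) = (-1) ^ (card \<kappa> - 1)"
    and "sgn (cs_det S J K) \<noteq> (-1) ^ (card K - 1)" "sgn (cs_det S J L) \<noteq> (-1) ^ (card L - 1)"
    using upf partition(3,4) \<open>K \<subset> \<kappa>\<close> \<open>L \<subset> \<kappa>\<close> unfolding unstable_pos_fb_def by auto
  ultimately show False
    using sgn_mult_alternating[of "cs_det S J K" "cs_det S J L" "card K" "card L"] by simp
qed

definition stoich :: "species \<Rightarrow> reaction \<Rightarrow> real" where
  "stoich m r = real (bIII_out r m) - real (bIII_in r m)"

abbreviation bIII_stoich_matrix :: "real^reaction^species" where
  "bIII_stoich_matrix \<equiv> stoich_matrix bIII_in bIII_out"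

lemma bIII_stoich_matrix_nth [simp]: "bIII_stoich_matrix $ m $ r = stoich m r"
  by (simp add: stoich_matrix_def stoich_def)

lemma other_other [simp]: "other (other c) = c"
  by (cases c) simp_all

lemma other_neq [simp]: "other c \<noteq> c" "c \<noteq> other c"
  by (cases c; simp)+

lemma other_eq_iff: "other c = d \<longleftrightarrow> c = other d"
  by (cases c; cases d; simp)

definition reactions_of :: "species \<Rightarrow> reaction list" where
  "reactions_of m = (case m of
       NE c \<Rightarrow> [R1 c] | NI c \<Rightarrow> [R1 c] | N c \<Rightarrow> [R2 c, R6 c] | Ds c \<Rightarrow> [R6 (other c), R8 c]
     | D c \<Rightarrow> [R2 (other c)] | T c \<Rightarrow> [R9 c] | B c \<Rightarrow> [R7 (other c)])"

lemma reactant_bIII_iff: "reactant bIII_in r m \<longleftrightarrow> r \<in> set (reactions_of m)"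
  unfolding reactant_def reactions_of_def
  by (cases r; cases m; auto simp: other_eq_iff eq_commute[of "other _"])

lemma stoich_reactant: "reactant bIII_in r m \<Longrightarrow> stoich m r = -1"
  unfolding reactant_bIII_iff reactions_of_def stoich_def by (cases m) auto

definition species_list :: "species list" where
  "species_list = [NE C1, NE C2, NI C1, NI C2, N C1, N C2, Ds C1, Ds C2, D C1, D C2,
     T C1, T C2, B C1, B C2]"

definition reaction_list :: "reaction list" where
  "reaction_list = [R1 C1, R1 C2, R2 C1, R2 C2, R6 C1, R6 C2, R7 C1, R7 C2, R8 C1, R8 C2,
     R9 C1, R9 C2]"

lemma species_in_list: "m \<in> set species_list"
  by (cases m; simp add: species_list_def; metis cell.exhaust)

lemma reaction_in_list: "r \<in> set reaction_list"
  by (cases r; simp add: reaction_list_def; metis cell.exhaust)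

lemma set_species_list: "set species_list = UNIV"
  using species_in_list by blast

lemma set_reaction_list: "set reaction_list = UNIV"
  using reaction_in_list by blast

lemma sum_UNIV_species: "(\<Sum>m\<in>UNIV. f m) = sum_list (map f species_list)"
  unfolding set_species_list[symmetric]
  by (rule sum.distinct_set_conv_list) (simp add: species_list_def)

lemma sum_UNIV_reaction: "(\<Sum>r\<in>UNIV. f r) = sum_list (map f reaction_list)"
  unfolding set_reaction_list[symmetric]
  by (rule sum.distinct_set_conv_list) (simp add: reaction_list_def)

lemma all_species: "(\<forall>m. P m) \<longleftrightarrow> list_all P species_list"
  by (metis UNIV_I list_all_iff set_species_list)

lemma all_reaction: "(\<forall>r. P r) \<longleftrightarrow> list_all P reaction_list"
  by (metis UNIV_I list_all_iff set_reaction_list)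

lemma card_species: "CARD(species) = 14"
  unfolding set_species_list[symmetric] by (simp add: species_list_def distinct_card)

lemmas species_list_eval = sum_UNIV_species sum_UNIV_reaction all_species all_reaction
  species_list_def reaction_list_def stoich_def

section \<open>Capacity for zero-eigenvalue bifurcation\<close>

definition law_pivots :: "species set" where
  "law_pivots = {NI C1, NI C2, Ds C1, Ds C2, NE C1}"

definition conservation_law :: "species \<Rightarrow> real^species" where
  "conservation_law p = (\<chi> m. case p of
       NI c \<Rightarrow> (if m \<in> {NI c, N c, B (other c)} then 1 else 0)
     | Ds c \<Rightarrow> (if m \<in> {Ds c, D c, T c, B c} then 1 else 0)
     | _ \<Rightarrow> (case m of NE _ \<Rightarrow> 1 | N _ \<Rightarrow> 1 | T _ \<Rightarrow> 1 | B _ \<Rightarrow> 1 | _ \<Rightarrow> 0))"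

lemma conservation_law_left_null:
  "p \<in> law_pivots \<Longrightarrow> conservation_law p v* bIII_stoich_matrix = 0"
  unfolding law_pivots_def
  by (auto simp: Finite_Cartesian_Product.vec_eq_iff vector_matrix_mult_def conservation_law_def
      species_list_eval)

lemma conservation_law_pivot:
  "p \<in> law_pivots \<Longrightarrow> q \<in> law_pivots \<Longrightarrow> conservation_law p $ q = (if q = p then 1 else 0)"
  unfolding law_pivots_def conservation_law_def by auto

lemma left_null_expand:
  assumes "w v* bIII_stoich_matrix = 0"
  shows "w = (\<Sum>p\<in>law_pivots. w $ p *\<^sub>R conservation_law p)"
proof -
  have "\<forall>r. (\<Sum>m\<in>UNIV. w $ m * stoich m r) = 0"
    using assms by (simp add: Finite_Cartesian_Product.vec_eq_iff vector_matrix_mult_def)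
  then show ?thesis
    unfolding law_pivots_def
    by (simp add: Finite_Cartesian_Product.vec_eq_iff conservation_law_def species_list_eval)
qed

lemma n_cons_bIII: "n_cons bIII_stoich_matrix = 5"
proof -
  have "n_cons bIII_stoich_matrix = card law_pivots"
    unfolding n_cons_def
    by (rule dim_eq_card_if_pivot_basis[OF subspace_left_null, where w = conservation_law])
      (simp_all add: conservation_law_left_null conservation_law_pivot left_null_expand)
  then show ?thesis
    by (simp add: law_pivots_def)
qed

definition cell_sign :: "cell \<Rightarrow> real" where
  "cell_sign c = (if c = C1 then 1 else -1)"

definition antisymmetric_mode :: "real^species" where
  "antisymmetric_mode = (\<chi> m. case m of
       NE c \<Rightarrow> - 2 * cell_sign c | NI c \<Rightarrow> 2 * cell_sign c | N c \<Rightarrow> - cell_sign c | Ds c \<Rightarrow> 0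
     | D c \<Rightarrow> - cell_sign c | T c \<Rightarrow> 0 | B c \<Rightarrow> cell_sign c)"

lemma jacobian_antisymmetric_mode:
  "(bIII_stoich_matrix ** react_matrix bIII_in (\<lambda>_ _. 1)) *v antisymmetric_mode = 0"
  by (simp add: Finite_Cartesian_Product.vec_eq_iff matrix_matrix_mult_def matrix_vector_mult_def
      react_matrix_def reactant_def antisymmetric_mode_def cell_sign_def species_list_eval)

lemma conservation_law_orthogonal_mode:
  "p \<in> law_pivots \<Longrightarrow> conservation_law p \<bullet> antisymmetric_mode = 0"
  unfolding law_pivots_def
  by (auto simp: inner_vec_def conservation_law_def antisymmetric_mode_def cell_sign_def
      species_list_eval)

lemma zero_eig_capacity_bIII: "zero_eig_capacity bIII_in bIII_out swap_reaction swap_species"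
  unfolding zero_eig_capacity_def
proof (intro exI[of _ "\<lambda>_ _. 1"] conjI allI impI)
  let ?G = "bIII_stoich_matrix ** react_matrix bIII_in (\<lambda>_ _. 1)"
  have "conservation_law p v* ?G = 0" if "p \<in> law_pivots" for p
    using conservation_law_left_null[OF that] by (simp flip: vector_matrix_mul_assoc)
  moreover have "antisymmetric_mode $ NE C1 \<noteq> 0"
    by (simp add: antisymmetric_mode_def cell_sign_def)
  then have "antisymmetric_mode \<noteq> 0"
    by auto
  ultimately have "principal_minor_sum (CARD(species) - card law_pivots) ?G = 0"
    using principal_minor_sum_eq_0_if_null_vectors conservation_law_pivot
      jacobian_antisymmetric_mode conservation_law_orthogonal_mode by blast
  then show "a_top bIII_stoich_matrix ?G = 0"
    unfolding a_top_def n_cons_bIII card_species by (simp add: law_pivots_def)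
qed simp_all

section \<open>Classification of the unstable-positive feedbacks\<close>

definition motif_species :: "cell \<Rightarrow> species list" where
  "motif_species c = [N c, Ds (other c), D (other c), T (other c)]"

definition motif_map :: "cell \<Rightarrow> species \<Rightarrow> reaction" where
  "motif_map c m = (if m = N c then R6 c else if m = Ds (other c) then R8 (other c)
     else if m = D (other c) then R2 c else R9 (other c))"

lemma bIII_motif_eq: "bIII_motif c = (set (motif_species c), motif_map c ` set (motif_species c))"
  by (cases c) (auto simp: bIII_motif_def motif_species_def motif_map_def)

lemma cs_det_bIII_eq_laplace_det:
  "distinct ms \<Longrightarrow> cs_det bIII_stoich_matrix J (set ms) = laplace_det ms (map J ms) stoich"
  unfolding cs_det_def bIII_stoich_matrix_nth by (rule det_on_eq_laplace_det)

lemma motif_minor_sign_iff: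
  assumes "ms \<in> set (subseqs (motif_species c))" "ms \<noteq> []"
  shows "sgn (laplace_det ms (map (motif_map c) ms) stoich) = (-1) ^ (length ms - 1)
    \<longleftrightarrow> ms = motif_species c"
proof -
  have "\<forall>ms\<in>set (subseqs (motif_species c)). ms \<noteq> [] \<longrightarrow>
    (sgn (laplace_det ms (map (motif_map c) ms) stoich) = (-1) ^ (length ms - 1)
      \<longleftrightarrow> ms = motif_species c)"
    by (cases c; code_simp)
  then show ?thesis using assms by blast
qed

lemma motif_unstable_pos_fb:
  "cs_triple bIII_in (set (motif_species c)) (motif_map c)
   \<and> unstable_pos_fb bIII_stoich_matrix (set (motif_species c)) (motif_map c)"
proof
  show "cs_triple bIII_in (set (motif_species c)) (motif_map c)"
    unfolding cs_triple_def reactant_bIII_iff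
    by (cases c) (auto simp: motif_species_def motif_map_def inj_on_def reactions_of_def)
  have distinct: "distinct (motif_species c)"
    by (cases c) (simp_all add: motif_species_def)
  have sign: "sgn (cs_det bIII_stoich_matrix (motif_map c) (set ms)) = (-1) ^ (card (set ms) - 1)
      \<longleftrightarrow> ms = motif_species c"
    if "ms \<in> set (subseqs (motif_species c))" "ms \<noteq> []" for ms
  proof -
    have "distinct ms"
      using subseqs_distinctD[OF that(1) distinct] .
    then show ?thesis
      using motif_minor_sign_iff[OF that] by (simp add: cs_det_bIII_eq_laplace_det distinct_card)
  qed
  show "unstable_pos_fb bIII_stoich_matrix (set (motif_species c)) (motif_map c)"
    unfolding unstable_pos_fb_def
  proof (intro conjI allI impI)
    show "sgn (cs_det bIII_stoich_matrix (motif_map c) (set (motif_species c)))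
        = (-1) ^ (card (set (motif_species c)) - 1)"
      using sign[of "motif_species c"] by (simp add: motif_species_def subseqs_refl)
    fix K assume K: "K \<subset> set (motif_species c) \<and> K \<noteq> {}"
    then obtain ms where ms: "ms \<in> set (subseqs (motif_species c))" "set ms = K"
      by (metis Pow_iff psubset_imp_subset subseqs_powset image_iff)
    moreover have "ms \<noteq> motif_species c" "ms \<noteq> []"
      using K ms(2) by auto
    ultimately show "sgn (cs_det bIII_stoich_matrix (motif_map c) K) \<noteq> (-1) ^ (card K - 1)"
      using sign by blast
  qed
qed

lemma unstable_pos_fb_bIII_card_ge_2:
  assumes "cs_triple bIII_in \<kappa> J" "unstable_pos_fb bIII_stoich_matrix \<kappa> J" "finite \<kappa>"
  shows "card \<kappa> \<ge> 2"
proof (rule ccontr)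
  assume "\<not> card \<kappa> \<ge> 2"
  moreover have "\<kappa> \<noteq> {}"
    using assms(1) unfolding cs_triple_def by simp
  ultimately have "card \<kappa> = 1"
    using assms(3) card_gt_0_iff[of \<kappa>] by linarith
  then obtain m where m: "\<kappa> = {m}"
    by (rule card_1_singletonE)
  then have "cs_det bIII_stoich_matrix J \<kappa> = stoich m (J m)"
    by (simp add: cs_det_def det_on_def)
  also have "\<dots> = -1"
    using assms(1) m by (simp add: cs_triple_def stoich_reactant)
  finally show False
    using assms(2) m unfolding unstable_pos_fb_def by simp
qed

definition offdiag_connected :: "species list \<Rightarrow> reaction list \<Rightarrow> bool" where
  "offdiag_connected ms rs \<longleftrightarrow>
     (\<forall>m\<in>set ms. \<exists>(l, r)\<in>set (zip ms rs). l \<noteq> m \<and> stoich m r \<noteq> 0)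
     \<and> (\<forall>(l, r)\<in>set (zip ms rs). \<exists>m\<in>set ms. m \<noteq> l \<and> stoich m r \<noteq> 0)"

lemma unstable_pos_fb_offdiag_connected:
  assumes upf: "unstable_pos_fb bIII_stoich_matrix (set ms) J" and "card (set ms) \<ge> 2"
  shows "offdiag_connected ms (map J ms)"
proof -
  have split: "\<exists>i\<in>K. \<exists>j\<in>L. stoich i (J j) \<noteq> 0"
    if "K \<union> L = set ms" "K \<inter> L = {}" "K = {m} \<or> L = {m}" "m \<in> set ms" for K L m
  proof -
    have "set ms \<noteq> {m}"
      using \<open>card (set ms) \<ge> 2\<close> by auto
    then have "set ms - {m} \<noteq> {}"
      using that(4) by auto
    then have "K \<noteq> {}" "L \<noteq> {}"
      using that by auto
    then show ?thesis
      using unstable_pos_fb_irreducible[OF upf _ that(1,2)] by simp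
  qed
  have "\<exists>l\<in>set ms. l \<noteq> m \<and> stoich m (J l) \<noteq> 0" if "m \<in> set ms" for m
    using split[of "{m}" "set ms - {m}" m] that by auto
  moreover have "\<exists>m\<in>set ms. m \<noteq> l \<and> stoich m (J l) \<noteq> 0" if "l \<in> set ms" for l
    using split[of "set ms - {l}" "{l}" l] that by auto
  ultimately show ?thesis
    unfolding offdiag_connected_def set_zip_map_self by auto
qed

lemma unstable_pos_fb_containing_motif:
  assumes upf: "unstable_pos_fb bIII_stoich_matrix \<kappa> J"
    and sub: "set (motif_species c) \<subseteq> \<kappa>"
    and agree: "\<And>m. m \<in> set (motif_species c) \<Longrightarrow> J m = motif_map c m"
  shows "(\<kappa>, J ` \<kappa>) = bIII_motif c"
proof -
  have "cs_det bIII_stoich_matrix J (set (motif_species c))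
      = cs_det bIII_stoich_matrix (motif_map c) (set (motif_species c))"
    unfolding cs_det_def by (rule det_on_cong) (simp add: agree)
  then have "sgn (cs_det bIII_stoich_matrix J (set (motif_species c)))
      = (-1) ^ (card (set (motif_species c)) - 1)"
    using motif_unstable_pos_fb[of c] unfolding unstable_pos_fb_def by simp
  moreover have "set (motif_species c) \<noteq> {}"
    by (simp add: motif_species_def)
  ultimately have "\<not> set (motif_species c) \<subset> \<kappa>"
    using upf unfolding unstable_pos_fb_def by blast
  then have "\<kappa> = set (motif_species c)"
    using sub by blast
  then show ?thesis
    using agree by (simp add: bIII_motif_eq)
qed

definition contains_motif :: "species list \<Rightarrow> reaction list \<Rightarrow> cell \<Rightarrow> bool" where
  "contains_motif ms rs c \<longleftrightarrow> (\<forall>m\<in>set (motif_species c). (m, motif_map c m) \<in> set (zip ms rs))"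

(* Each disjunct excludes an unstable-positive feedback, except that a candidate containing a
   motif must be that motif (unstable_pos_fb_containing_motif). *)
definition candidate_refuted :: "species list \<Rightarrow> reaction list \<Rightarrow> bool" where
  "candidate_refuted ms rs \<longleftrightarrow> length ms < 2 \<or> \<not> offdiag_connected ms rs
     \<or> contains_motif ms rs C1 \<or> contains_motif ms rs C2
     \<or> sgn (laplace_det ms rs stoich) \<noteq> (-1) ^ (length ms - 1)"

lemma candidate_refuted_sound:
  assumes cs: "cs_triple bIII_in (set ms) J" and upf: "unstable_pos_fb bIII_stoich_matrix (set ms) J"
    and "distinct ms" and refuted: "candidate_refuted ms (map J ms)"
  shows "(set ms, J ` set ms) \<in> {bIII_motif C1, bIII_motif C2}"
proof -
  have length: "length ms = card (set ms)"
    using \<open>distinct ms\<close> by (simp add: distinct_card)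
  have "length ms \<ge> 2"
    unfolding length using unstable_pos_fb_bIII_card_ge_2[OF cs upf] by simp
  moreover have "offdiag_connected ms (map J ms)"
    using unstable_pos_fb_offdiag_connected[OF upf] \<open>length ms \<ge> 2\<close> length by simp
  moreover have "sgn (laplace_det ms (map J ms) stoich) = (-1) ^ (length ms - 1)"
    using upf \<open>distinct ms\<close> length
    unfolding unstable_pos_fb_def by (simp add: cs_det_bIII_eq_laplace_det)
  ultimately obtain c where "contains_motif ms (map J ms) c"
    using refuted unfolding candidate_refuted_def by auto
  then have "set (motif_species c) \<subseteq> set ms"
    and "\<And>m. m \<in> set (motif_species c) \<Longrightarrow> J m = motif_map c m"
    unfolding contains_motif_def set_zip_map_self by auto
  then have "(set ms, J ` set ms) = bIII_motif c"
    by (rule unstable_pos_fb_containing_motif[OF upf])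
  then show ?thesis
    by (cases c) simp_all
qed

(* Checks every injective choice of reactant reactions for the species in todo. *)
fun all_cs_maps_refuted :: "species list \<Rightarrow> reaction list \<Rightarrow> species list \<Rightarrow> bool" where
  "all_cs_maps_refuted ms rs [] \<longleftrightarrow> candidate_refuted ms rs"
| "all_cs_maps_refuted ms rs (m # todo) \<longleftrightarrow>
     (\<forall>r\<in>set (reactions_of m). r \<in> set rs \<or> all_cs_maps_refuted (ms @ [m]) (rs @ [r]) todo)"

lemma all_cs_maps_refuted_sound:
  "all_cs_maps_refuted ms rs todo \<Longrightarrow> list_all2 (\<lambda>r m. r \<in> set (reactions_of m)) rs' todo
   \<Longrightarrow> distinct (rs @ rs') \<Longrightarrow> candidate_refuted (ms @ todo) (rs @ rs')"
proof (induction ms rs todo arbitrary: rs' rule: all_cs_maps_refuted.induct)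
  case (2 ms rs m todo)
  then obtain r rs'' where "rs' = r # rs''" "r \<in> set (reactions_of m)"
    "list_all2 (\<lambda>r m. r \<in> set (reactions_of m)) rs'' todo"
    by (cases rs') auto
  with "2" show ?case by auto
qed simp

lemma unstable_pos_fb_by_enumeration:
  assumes cs: "cs_triple bIII_in \<kappa> J" and upf: "unstable_pos_fb bIII_stoich_matrix \<kappa> J"
    and "distinct (F @ U)" "set F \<subseteq> \<kappa>" "\<kappa> \<subseteq> set F \<union> set U"
    and enumerated: "\<forall>xs\<in>set (subseqs U). all_cs_maps_refuted [] [] (F @ xs)"
  shows "(\<kappa>, J ` \<kappa>) \<in> {bIII_motif C1, bIII_motif C2}"
proof -
  have "\<kappa> - set F \<in> Pow (set U)"
    using \<open>\<kappa> \<subseteq> set F \<union> set U\<close> by auto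
  then obtain xs where xs: "xs \<in> set (subseqs U)" "set xs = \<kappa> - set F"
    unfolding subseqs_powset[symmetric] by auto
  define ms where "ms = F @ xs"
  have "distinct ms" "set ms = \<kappa>"
    using xs subseqs_distinctD[OF xs(1)] assms(3,4) unfolding ms_def by auto
  moreover have "list_all2 (\<lambda>r m. r \<in> set (reactions_of m)) (map J ms) ms"
    using cs \<open>set ms = \<kappa>\<close> by (auto simp: list_all2_conv_all_nth cs_triple_def reactant_bIII_iff)
  moreover have "distinct (map J ms)"
    using cs \<open>distinct ms\<close> \<open>set ms = \<kappa>\<close> by (simp add: cs_triple_def distinct_map)
  ultimately have "candidate_refuted ms (map J ms)"
    using all_cs_maps_refuted_sound[of "[]" "[]" ms] enumerated xs(1) unfolding ms_def by simp
  then show ?thesis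
    using candidate_refuted_sound cs upf \<open>distinct ms\<close> \<open>set ms = \<kappa>\<close> by blast
qed

definition block :: "cell \<Rightarrow> species list" where
  "block c = [NE c, NI c, N c, Ds (other c), D (other c), T (other c), B (other c)]"

lemma block_cover: "m \<in> set (block c) \<or> m \<in> set (block (other c))"
  using species_in_list[of m] by (cases c) (auto simp: block_def species_list_def)

lemma block_exit:
  assumes "i \<in> set (block c)" "j \<notin> set (block c)" "r \<in> set (reactions_of j)" "stoich i r \<noteq> 0"
  shows "i = NE c \<and> j = T c"
  using assms species_in_list[of j]
  by (cases c) (auto simp: block_def reactions_of_def stoich_def species_list_def)

lemma unstable_pos_fb_across_blocks:
  assumes cs: "cs_triple bIII_in \<kappa> J" and upf: "unstable_pos_fb bIII_stoich_matrix \<kappa> J"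
    and "\<not> \<kappa> \<subseteq> set (block c)" "\<not> \<kappa> \<subseteq> set (block (other c))"
  shows "NE c \<in> \<kappa> \<and> T c \<in> \<kappa>"
proof -
  have "\<kappa> \<inter> set (block c) \<noteq> {}" "\<kappa> - set (block c) \<noteq> {}"
    using assms(3,4) block_cover[of _ c] by auto
  then obtain i j where "i \<in> \<kappa> \<inter> set (block c)" "j \<in> \<kappa> - set (block c)" "stoich i (J j) \<noteq> 0"
    using unstable_pos_fb_irreducible[OF upf, of "\<kappa> \<inter> set (block c)" "\<kappa> - set (block c)"]
    by auto
  moreover have "J j \<in> set (reactions_of j)"
    using cs \<open>j \<in> \<kappa> - set (block c)\<close> by (simp add: cs_triple_def reactant_bIII_iff)
  ultimately show ?thesis
    using block_exit[of i c j "J j"] by auto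
qed

lemma unstable_pos_fb_NE_T_forces_N:
  assumes cs: "cs_triple bIII_in \<kappa> J" and upf: "unstable_pos_fb bIII_stoich_matrix \<kappa> J"
    and "NE c \<in> \<kappa>" "T c \<in> \<kappa>"
  shows "N c \<in> \<kappa> \<and> NI c \<notin> \<kappa>"
proof -
  have J: "J m \<in> set (reactions_of m)" if "m \<in> \<kappa>" for m
    using cs that by (simp add: cs_triple_def reactant_bIII_iff)
  have J_NE: "J (NE c) = R1 c"
    using J[OF \<open>NE c \<in> \<kappa>\<close>] by (simp add: reactions_of_def)
  have "NI c \<notin> \<kappa>"
  proof
    assume "NI c \<in> \<kappa>"
    then have "J (NI c) = J (NE c)"
      using J[of "NI c"] J_NE by (simp add: reactions_of_def)
    then show False
      using cs \<open>NI c \<in> \<kappa>\<close> \<open>NE c \<in> \<kappa>\<close> unfolding cs_triple_def inj_on_def by blast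
  qed
  moreover obtain i where "i \<in> \<kappa> - {NE c}" "stoich i (R1 c) \<noteq> 0"
    using unstable_pos_fb_irreducible[OF upf, of "\<kappa> - {NE c}" "{NE c}"] assms(3,4) J_NE by auto
  moreover have "stoich i (R1 c) \<noteq> 0 \<Longrightarrow> i \<in> {NE c, NI c, N c}"
    using species_in_list[of i] by (cases c) (auto simp: stoich_def species_list_def)
  ultimately show ?thesis
    by auto
qed

lemma block_candidates_refuted: "\<forall>xs\<in>set (subseqs (block c)). all_cs_maps_refuted [] [] xs"
proof -
  have "\<forall>c\<in>set [C1, C2]. \<forall>xs\<in>set (subseqs (block c)). all_cs_maps_refuted [] [] xs"
    by code_simp
  then show ?thesis
    by (cases c) simp_all
qed

lemma crossing_candidates_refuted:
  "\<forall>xs\<in>set (subseqs [Ds C1, Ds C2, B C1, B C2, D C1, D C2]).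
     all_cs_maps_refuted [] [] ([NE C1, NE C2, N C1, N C2, T C1, T C2] @ xs)"
  by code_simp

theorem unstable_pos_fb_bIII_motif:
  assumes cs: "cs_triple bIII_in \<kappa> J" and upf: "unstable_pos_fb bIII_stoich_matrix \<kappa> J"
  shows "(\<kappa>, J ` \<kappa>) \<in> {bIII_motif C1, bIII_motif C2}"
proof (cases "\<exists>c. \<kappa> \<subseteq> set (block c)")
  case True
  then obtain c where "\<kappa> \<subseteq> set (block c)" ..
  moreover have "distinct (block c)"
    by (cases c) (simp_all add: block_def)
  ultimately show ?thesis
    using unstable_pos_fb_by_enumeration[OF cs upf, of "[]" "block c"] block_candidates_refuted
    by simp
next
  case False
  then have NE_T: "NE c \<in> \<kappa> \<and> T c \<in> \<kappa>" for c
    using unstable_pos_fb_across_blocks[OF cs upf] by blast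
  then have N_NI: "N c \<in> \<kappa> \<and> NI c \<notin> \<kappa>" for c
    using unstable_pos_fb_NE_T_forces_N[OF cs upf] by blast
  have "set [NE C1, NE C2, N C1, N C2, T C1, T C2] \<subseteq> \<kappa>"
    using NE_T N_NI by auto
  moreover have "\<kappa> \<subseteq> set [NE C1, NE C2, N C1, N C2, T C1, T C2]
      \<union> set [Ds C1, Ds C2, B C1, B C2, D C1, D C2]"
    using N_NI species_in_list by (auto simp: species_list_def)
  ultimately show ?thesis
    by (intro unstable_pos_fb_by_enumeration[OF cs upf _ _ _ crossing_candidates_refuted]) simp_all
qed

lemma instability_motifs_bIII: "instability_motifs bIII_in bIII_out = {bIII_motif C1, bIII_motif C2}"
proof
  show "instability_motifs bIII_in bIII_out \<subseteq> {bIII_motif C1, bIII_motif C2}"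
    unfolding instability_motifs_def using unstable_pos_fb_bIII_motif by blast
  have "bIII_motif c \<in> instability_motifs bIII_in bIII_out" for c
    unfolding instability_motifs_def bIII_motif_eq using motif_unstable_pos_fb[of c] by blast
  then show "{bIII_motif C1, bIII_motif C2} \<subseteq> instability_motifs bIII_in bIII_out"
    by simp
qed

lemma unstable_pos_fb_bIII_not_metzler:
  assumes cs: "cs_triple bIII_in \<kappa> J" and upf: "unstable_pos_fb bIII_stoich_matrix \<kappa> J"
  shows "\<not> cs_metzler bIII_stoich_matrix \<kappa> J"
proof
  assume metzler: "cs_metzler bIII_stoich_matrix \<kappa> J"
  obtain c where "(\<kappa>, J ` \<kappa>) = bIII_motif c"
    using unstable_pos_fb_bIII_motif[OF cs upf] by blast
  then have "N c \<in> \<kappa>" "D (other c) \<in> \<kappa>"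
    unfolding bIII_motif_def by auto
  moreover have "J (D (other c)) \<in> set (reactions_of (D (other c)))"
    using cs \<open>D (other c) \<in> \<kappa>\<close> unfolding cs_triple_def reactant_bIII_iff by blast
  then have "J (D (other c)) = R2 c"
    by (simp add: reactions_of_def)
  then have "stoich (N c) (J (D (other c))) = -1"
    by (cases c) (simp_all add: stoich_def)
  ultimately show False
    using metzler unfolding cs_metzler_def by fastforce
qed

theorem theorem3p3:
  shows "zero_eig_capacity bIII_in bIII_out swap_reaction swap_species
       \<and> instability_motifs bIII_in bIII_out = {bIII_motif C1, bIII_motif C2}
       \<and> (\<forall>\<kappa> J. cs_triple bIII_in \<kappa> J
                \<and> unstable_pos_fb (stoich_matrix bIII_in bIII_out) \<kappa> J
                \<longrightarrow> \<not> cs_metzler (stoich_matrix bIII_in bIII_out) \<kappa> J)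
       \<and> non_autocatalytic bIII_in bIII_out"
  using zero_eig_capacity_bIII instability_motifs_bIII unstable_pos_fb_bIII_not_metzler
  unfolding non_autocatalytic_def by blast

end
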